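(* Define the Genocchi medians $h_n$ ($n\ge0$) by $1+\sum_{n\ge 1}h_{n-1} t^n = t^{-1}\sum_{m\ge 1}\frac{\big((m-1)!\big)^2t^{m}}{\prod_{k=1}^m \big(1+k(k-1)t\big)}$. Then for all $n\ge 2$, $h_{n-2}$ equals the number of cycles on $[2n-1]$ with only odd-odd drops, i.e. cycles all of whose drops $(a,b)$ have both $a$ and $b$ odd.
   Context: For $N\ge1$, a cycle on $[N]=\{1,\dots,N\}$ is an equivalence class of permutations $\pi=\pi_1\cdots\pi_N$ of $[N]$ (one-line notation) under cyclic rotation of the entries; indices are read modulo $N$ (so $\pi_{N+1}=\pi_1$). A drop of a cycle is a consecutive pair $(\pi_i,\pi_{i+1})$, $1\le i\le N$, with $\pi_i>\pi_{i+1}$ (independent of the rotation chosen). A drop $(a,b)$ is odd-odd if $a$ and $b$ are both odd. *)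

theory Defs
  imports "HOL-Computational_Algebra.Formal_Power_Series"
begin

definition genocchi_term :: "nat \<Rightarrow> rat fps" where
  "genocchi_term m =
     fps_const ((fact (m - 1))^2) * fps_X ^ m *
     inverse (\<Prod>k = 1..m. 1 + of_nat (k * (k - 1)) * fps_X)"

(* S(t) = sum_{m>=1} genocchi_term m; the m-th term is O(t^m), so the coefficient of t^N
   only receives contributions from m <= N *)
definition genocchi_series :: "rat fps" where
  "genocchi_series = Abs_fps (\<lambda>N. \<Sum>m = 1..N. fps_nth (genocchi_term m) N)"

(* 1 + sum_{n>=1} h_{n-1} t^n = t^{-1} S(t), i.e. h_j = [t^(j+2)] S(t) *)
definition genocchi_median :: "nat \<Rightarrow> rat" where
  "genocchi_median j = fps_nth genocchi_series (j + 2)"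

definition perms_list :: "nat \<Rightarrow> nat list set" where
  "perms_list N = {xs. distinct xs \<and> set xs = {1..N}}"

(* a cycle = equivalence class of one-line permutations under cyclic rotation *)
definition cycles_on :: "nat \<Rightarrow> nat list set set" where
  "cycles_on N = (\<lambda>xs. {rotate k xs | k. k < N}) ` perms_list N"

definition only_odd_odd_drops :: "nat list \<Rightarrow> bool" where
  "only_odd_odd_drops xs =
     (\<forall>i < length xs. xs ! i > xs ! (Suc i mod length xs) \<longrightarrow>
        odd (xs ! i) \<and> odd (xs ! (Suc i mod length xs)))"

end

theory Submission
  imports Defs
begin

(*
  Call a list of distinct numbers an odd block if it starts with an odd number and all its
  descents are odd-odd, and let T(i, h) be the number of partitions of {1..2i} into h odd blocks.
  Inserting the maximum m into such a partition (as a new block, at either end of a block, or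
  between two blocks, which it joins) shows
    T(i + 1, h) = h T(i, h - 1) + 2 h^2 T(i, h) + h^2 (h + 1) T(i, h + 1).
  Rotating a cycle on [2n - 1] so that it starts with 2n - 1 identifies the cycles with only
  odd-odd drops with the odd blocks on {1..2n - 2}, which are counted by T(n - 1, 1).

  On the series side, u(i, p) = [t^(i+1)] of the (p + 1)-st summand satisfies
  u(i + 1, p) = p^2 u(i, p - 1) - p (p + 1) u(i, p). The coefficients c(k, p) of the polynomials
  k! x (x - 1)^(k - 1) intertwine the two recurrences: sum_h c(h, p) T(i, h) = u(i, p). Summing
  over p evaluates these polynomials at x = 1, where only k <= 1 survive, so h_(i-1) = T(i, 1).
*)

section \<open>Coefficients of the Genocchi series\<close>

unbundle fps_syntax

definition genocchi_denom :: "nat \<Rightarrow> rat fps" where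
  "genocchi_denom m = (\<Prod>k = 1..m. 1 + of_nat (k * (k - 1)) * fps_X)"

lemma genocchi_denom_Suc:
  "genocchi_denom (Suc m) = genocchi_denom m * (1 + of_nat (Suc m * m) * fps_X)"
  unfolding genocchi_denom_def by (simp only: prod.cl_ivl_Suc diff_Suc_1) (simp add: mult.commute)

lemma genocchi_term_nth_less: "N < m \<Longrightarrow> genocchi_term m $ N = 0"
  by (simp add: genocchi_term_def mult.assoc fps_X_power_mult_nth)

lemma genocchi_term_Suc_0: "genocchi_term (Suc 0) = fps_X"
  by (simp add: genocchi_term_def)

lemma genocchi_term_Suc:
  assumes "0 < m"
  shows "fps_X * (of_nat (m\<^sup>2) * genocchi_term m) =
    genocchi_term (Suc m) * (1 + of_nat (Suc m * m) * fps_X)"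
proof -
  define q :: "rat fps" where "q = 1 + of_nat (Suc m * m) * fps_X"
  have "q $ 0 = 1" by (simp add: q_def)
  then have "inverse (genocchi_denom m * q) * q = inverse (genocchi_denom m)"
    by (simp add: fps_inverse_mult mult.assoc inverse_mult_eq_1)
  moreover have "(fact m :: rat) = of_nat m * fact (m - 1)"
    using assms by (simp add: fact_reduce)
  then have "of_nat (m\<^sup>2) * fps_const ((fact (m - 1))\<^sup>2) = (fps_const ((fact m)\<^sup>2) :: rat fps)"
    by (simp add: power_mult_distrib flip: fps_of_nat fps_const_mult fps_const_power)
  ultimately show ?thesis
    unfolding genocchi_term_def genocchi_denom_def[symmetric] genocchi_denom_Suc q_def[symmetric]
    by (simp add: mult_ac)
qed

lemma genocchi_term_Suc_nth:
  "genocchi_term (Suc p) $ Suc (Suc i) =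
     of_nat p ^ 2 * genocchi_term p $ Suc i - of_nat (Suc p * p) * genocchi_term (Suc p) $ Suc i"
proof (cases "p = 0")
  case True
  then show ?thesis by (simp add: genocchi_term_Suc_0)
next
  case False
  then have "(fps_X * (of_nat (p\<^sup>2) * genocchi_term p)) $ Suc (Suc i) =
      (genocchi_term (Suc p) * (1 + of_nat (Suc p * p) * fps_X)) $ Suc (Suc i)"
    by (simp only: genocchi_term_Suc)
  then show ?thesis
    by (simp add: algebra_simps flip: fps_of_nat)
qed

(* transfer_coeff k p is the coefficient of x^p in k! x (x - 1)^(k - 1), and in 1 for k = 0;
   at p = 0 the truncated p - 1 in the recursion still yields the right value 0. *)
fun transfer_coeff :: "nat \<Rightarrow> nat \<Rightarrow> rat" where
  "transfer_coeff 0 p = (if p = 0 then 1 else 0)"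
| "transfer_coeff (Suc 0) p = (if p = 1 then 1 else 0)"
| "transfer_coeff (Suc (Suc k)) p =
     of_nat (k + 2) * (transfer_coeff (Suc k) (p - 1) - transfer_coeff (Suc k) p)"

lemma transfer_coeff_Suc_0 [simp]: "transfer_coeff (Suc k) 0 = 0"
  by (cases k) simp_all

lemma transfer_coeff_eq_0: "k < p \<Longrightarrow> transfer_coeff k p = 0"
  by (induction k p rule: transfer_coeff.induct) auto

lemma transfer_coeff_Suc_right:
  "of_nat p * transfer_coeff k (Suc p) = (of_nat p - of_nat k) * transfer_coeff k p"
proof (induction k p rule: transfer_coeff.induct)
  case (3 k p)
  show ?case
  proof (cases p)
    case (Suc q)
    define A B C where "A = transfer_coeff (Suc k) q" and "B = transfer_coeff (Suc k) (Suc q)"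
      and "C = transfer_coeff (Suc k) (Suc (Suc q))"
    define K Q :: rat where "K = of_nat k" and "Q = of_nat q"
    have "Q * B = (Q - K - 1) * A" "(Q + 1) * C = (Q - K) * B"
      using 3 Suc unfolding A_def B_def C_def K_def Q_def by (simp_all add: algebra_simps)
    moreover have "(Q + 1) * ((K + 2) * (B - C)) - (Q + 1 - (K + 2)) * ((K + 2) * (A - B)) =
        (K + 2) * ((Q - K) * B - (Q + 1) * C) + (K + 2) * (Q * B - (Q - K - 1) * A)"
      by (simp add: algebra_simps)
    ultimately show ?thesis
      unfolding Suc A_def B_def C_def K_def Q_def by (simp add: algebra_simps)
  qed simp
qed auto

lemma transfer_coeff_Suc_left:
  "(of_nat p - of_nat (Suc k)) * transfer_coeff (Suc k) p = of_nat (Suc k) * of_nat k * transfer_coeff k p"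
proof (cases k)
  case (Suc k')
  show ?thesis
  proof (cases p)
    case (Suc q)
    define A B where "A = transfer_coeff (Suc k') q" and "B = transfer_coeff (Suc k') (Suc q)"
    define K Q :: rat where "K = of_nat k'" and "Q = of_nat q"
    have "Q * B = (Q - K - 1) * A"
      using transfer_coeff_Suc_right[of q "Suc k'"] unfolding A_def B_def K_def Q_def
      by (simp add: algebra_simps)
    moreover have "(Q + 1 - (K + 2)) * ((K + 2) * (A - B)) - (K + 2) * (K + 1) * B
        = - (K + 2) * (Q * B - (Q - K - 1) * A)"
      by (simp add: algebra_simps)
    ultimately show ?thesis
      unfolding \<open>k = Suc k'\<close> Suc A_def B_def K_def Q_def by (simp add: algebra_simps)
  qed (simp add: Suc)
qed auto

lemma transfer_coeff_intertwining:
  "of_nat (Suc k) * transfer_coeff (Suc k) p + 2 * of_nat k ^ 2 * transfer_coeff k p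
     + (of_nat k - 1) ^ 2 * of_nat k * transfer_coeff (k - 1) p
   = of_nat p ^ 2 * transfer_coeff k (p - 1) - of_nat (Suc p) * of_nat p * transfer_coeff k p"
proof (cases "k = 0 \<or> p = 0")
  case True
  then show ?thesis by (cases k; cases "k - 1") auto
next
  case False
  then obtain k' q where k: "k = Suc k'" and p: "p = Suc q" by (meson not0_implies_Suc)
  define A B C D where "A = transfer_coeff k q" and "B = transfer_coeff k p"
    and "C = transfer_coeff (Suc k) p" and "D = transfer_coeff k' p"
  define K Q :: rat where "K = of_nat k" and "Q = of_nat q"
  have "C = (K + 1) * (A - B)"
    unfolding C_def A_def B_def K_def k p by simp
  moreover have "(Q + 1 - K) * B = K * (K - 1) * D"
    using transfer_coeff_Suc_left[of p k'] unfolding B_def D_def K_def Q_def k p by simp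
  moreover have "Q * B = (Q - K) * A"
    using transfer_coeff_Suc_right[of q k] unfolding A_def B_def K_def Q_def p by simp
  moreover have "(K + 1) * C + 2 * K ^ 2 * B + (K - 1) ^ 2 * K * D - ((Q + 1) ^ 2 * A - (Q + 2) * (Q + 1) * B)
     = (K + 1) * (C - (K + 1) * (A - B)) + (K - 1) * (K * (K - 1) * D - (Q + 1 - K) * B)
       + (Q + K + 2) * (Q * B - (Q - K) * A)"
    by (simp add: algebra_simps power2_eq_square)
  ultimately show ?thesis
    unfolding A_def B_def C_def D_def K_def Q_def k p by (simp add: algebra_simps)
qed

lemma sum_transfer_coeff:
  assumes "k < P"
  shows "(\<Sum>p<P. transfer_coeff k p) = (if k \<le> 1 then 1 else 0)"
proof (cases "k \<le> 1")
  case False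
  define k' where "k' = k - 2"
  have k: "k = Suc (Suc k')" using False unfolding k'_def by simp
  obtain P' where P: "P = Suc P'" using assms by (cases P) auto
  have "(\<Sum>p<P. transfer_coeff (Suc k') (p - 1)) = (\<Sum>p<P'. transfer_coeff (Suc k') p)"
    unfolding P by (simp add: sum.lessThan_Suc_shift del: sum.lessThan_Suc)
  moreover have "(\<Sum>p<P. transfer_coeff (Suc k') p) = (\<Sum>p<P'. transfer_coeff (Suc k') p)"
    using assms transfer_coeff_eq_0[of "Suc k'" P'] unfolding P k by simp
  ultimately show ?thesis
    unfolding k by (simp add: sum_distrib_left[symmetric] sum_subtractf)
next
  case True
  then consider "k = 0" | "k = Suc 0" by linarith
  then show ?thesis using assms by cases simp_all
qed

fun median_triangle :: "nat \<Rightarrow> nat \<Rightarrow> nat" where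
  "median_triangle 0 h = (if h = 0 then 1 else 0)"
| "median_triangle (Suc i) h =
     h * median_triangle i (h - 1) + 2 * h\<^sup>2 * median_triangle i h
     + h\<^sup>2 * (h + 1) * median_triangle i (Suc h)"

lemma median_triangle_eq_0: "i < h \<Longrightarrow> median_triangle i h = 0"
  by (induction i arbitrary: h) auto

lemma sum_median_triangle_Suc:
  fixes f :: "nat \<Rightarrow> rat"
  assumes "Suc i < K"
  shows "(\<Sum>h<K. f h * of_nat (median_triangle (Suc i) h)) =
    (\<Sum>h<K. of_nat (median_triangle i h) *
       (of_nat (Suc h) * f (Suc h) + 2 * of_nat h ^ 2 * f h + (of_nat h - 1) ^ 2 * of_nat h * f (h - 1)))"
proof -
  let ?m = "\<lambda>h. of_nat (median_triangle i h) :: rat"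
  obtain K' where K: "K = Suc K'" using assms by (cases K) auto
  have vanish: "?m h = 0" if "K' \<le> h" for h
    using assms median_triangle_eq_0[of i h] that K by simp
  have "(\<Sum>h<K. f h * (of_nat h * ?m (h - 1))) = (\<Sum>h<K'. f (Suc h) * (of_nat (Suc h) * ?m h))"
    unfolding K by (simp only: sum.lessThan_Suc_shift) simp
  then have down: "(\<Sum>h<K. f h * (of_nat h * ?m (h - 1))) = (\<Sum>h<K. of_nat (Suc h) * f (Suc h) * ?m h)"
    unfolding K using vanish[of K'] by (simp add: mult_ac)
  have "(\<Sum>h<Suc K. (of_nat h - 1) ^ 2 * of_nat h * f (h - 1) * ?m h)
      = (\<Sum>h<K. f h * (of_nat h ^ 2 * of_nat (Suc h) * ?m (Suc h)))"
    by (simp only: sum.lessThan_Suc_shift) (simp add: mult_ac)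
  then have up: "(\<Sum>h<K. f h * (of_nat h ^ 2 * of_nat (Suc h) * ?m (Suc h)))
      = (\<Sum>h<K. (of_nat h - 1) ^ 2 * of_nat h * f (h - 1) * ?m h)"
    using vanish[of K] K by simp
  show ?thesis
    using down up by (simp add: algebra_simps sum.distrib)
qed

lemma sum_transfer_coeff_median_triangle:
  "Suc i < K \<Longrightarrow>
     (\<Sum>h<K. transfer_coeff h p * of_nat (median_triangle i h)) = genocchi_term (Suc p) $ Suc i"
proof (induction i arbitrary: K p)
  case 0
  have "(\<Sum>h<K. transfer_coeff h p * of_nat (median_triangle 0 h))
      = (\<Sum>h<K. if h = 0 then transfer_coeff 0 p else 0)"
    by (intro sum.cong) auto
  with 0 have "(\<Sum>h<K. transfer_coeff h p * of_nat (median_triangle 0 h)) = transfer_coeff 0 p"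
    by simp
  then show ?case
    by (cases p) (simp_all add: genocchi_term_Suc_0 genocchi_term_nth_less)
next
  case (Suc i)
  let ?m = "\<lambda>h. of_nat (median_triangle i h) :: rat"
  have "(\<Sum>h<K. transfer_coeff h p * of_nat (median_triangle (Suc i) h))
      = (\<Sum>h<K. ?m h * (of_nat (Suc h) * transfer_coeff (Suc h) p + 2 * of_nat h ^ 2 * transfer_coeff h p
                         + (of_nat h - 1) ^ 2 * of_nat h * transfer_coeff (h - 1) p))"
    using Suc.prems by (intro sum_median_triangle_Suc) simp
  also have "\<dots> = (\<Sum>h<K. ?m h * (of_nat p ^ 2 * transfer_coeff h (p - 1)
                                   - of_nat (Suc p) * of_nat p * transfer_coeff h p))"
    by (simp only: transfer_coeff_intertwining)
  also have "\<dots> = of_nat p ^ 2 * (\<Sum>h<K. transfer_coeff h (p - 1) * ?m h)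
                    - of_nat (Suc p * p) * (\<Sum>h<K. transfer_coeff h p * ?m h)"
    by (simp add: sum_subtractf sum_distrib_left algebra_simps)
  also have "\<dots> = of_nat p ^ 2 * genocchi_term p $ Suc i
                    - of_nat (Suc p * p) * genocchi_term (Suc p) $ Suc i"
    using Suc.IH[of K "p - 1"] Suc.IH[of K p] Suc.prems by (cases p) simp_all
  also have "\<dots> = genocchi_term (Suc p) $ Suc (Suc i)"
    by (rule genocchi_term_Suc_nth[symmetric])
  finally show ?case .
qed

lemma sum_genocchi_term_nth:
  assumes "1 \<le> i" and "Suc i < P"
  shows "(\<Sum>p<P. genocchi_term (Suc p) $ Suc i) = of_nat (median_triangle i 1)"
proof -
  let ?m = "\<lambda>h. of_nat (median_triangle i h) :: rat"
  have "(\<Sum>p<P. genocchi_term (Suc p) $ Suc i) = (\<Sum>p<P. \<Sum>h<P. transfer_coeff h p * ?m h)"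
    using sum_transfer_coeff_median_triangle assms(2) by simp
  also have "\<dots> = (\<Sum>h<P. ?m h * (\<Sum>p<P. transfer_coeff h p))"
    by (subst sum.swap) (simp add: sum_distrib_left mult_ac)
  also have "\<dots> = (\<Sum>h<P. if h \<le> 1 then ?m h else 0)"
    by (intro sum.cong) (simp_all add: sum_transfer_coeff)
  also have "\<dots> = ?m 0 + ?m 1"
  proof -
    have "{..<P} \<inter> {h. h \<le> 1} = {0, 1}" using assms(2) by auto
    then show ?thesis by (simp add: sum.If_cases)
  qed
  also have "?m 0 = 0"
    using assms(1) by (cases i) simp_all
  finally show ?thesis by simp
qed

lemma genocchi_median_eq_median_triangle: "genocchi_median i = of_nat (median_triangle (Suc i) 1)"
proof -
  have "genocchi_median i = (\<Sum>p<i + 2. genocchi_term (Suc p) $ Suc (Suc i))"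
    by (simp add: genocchi_median_def genocchi_series_def sum.atLeast1_atMost_eq)
  also have "\<dots> = (\<Sum>p<Suc (i + 2). genocchi_term (Suc p) $ Suc (Suc i))"
    unfolding sum.lessThan_Suc[of _ "i + 2"] by (simp add: genocchi_term_nth_less)
  also have "\<dots> = of_nat (median_triangle (Suc i) 1)"
    by (rule sum_genocchi_term_nth) simp_all
  finally show ?thesis .
qed

section \<open>Partitions into odd blocks\<close>

definition allowed_step :: "nat \<Rightarrow> nat \<Rightarrow> bool" where
  "allowed_step a b \<longleftrightarrow> (b < a \<longrightarrow> odd a \<and> odd b)"

definition odd_block :: "nat list \<Rightarrow> bool" where
  "odd_block L \<longleftrightarrow> L \<noteq> [] \<and> distinct L \<and> odd (hd L) \<and> successively allowed_step L"

definition block_partition :: "nat set \<Rightarrow> nat list set \<Rightarrow> bool" where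
  "block_partition X S \<longleftrightarrow>
     (\<forall>L\<in>S. odd_block L) \<and> pairwise (\<lambda>L L'. disjnt (set L) (set L')) S \<and> (\<Union>L\<in>S. set L) = X"

definition block_partitions :: "nat set \<Rightarrow> nat \<Rightarrow> nat list set set" where
  "block_partitions X h = {S. block_partition X S \<and> card S = h}"

lemma block_partition_Nil_notin: "block_partition X S \<Longrightarrow> [] \<notin> S"
  by (auto simp: block_partition_def odd_block_def)

lemma block_partition_set_subset: "block_partition X S \<Longrightarrow> L \<in> S \<Longrightarrow> set L \<subseteq> X"
  by (auto simp: block_partition_def)

lemma finite_block_partitions: "finite X \<Longrightarrow> finite {S. block_partition X S}"
proof -
  assume "finite X"
  then have "finite (Pow {xs. set xs \<subseteq> X \<and> distinct xs})"
    by (simp add: finite_subset_distinct)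
  moreover have "{S. block_partition X S} \<subseteq> Pow {xs. set xs \<subseteq> X \<and> distinct xs}"
    by (auto simp: block_partition_def odd_block_def)
  ultimately show ?thesis by (rule finite_subset[rotated])
qed

lemma block_partition_finite: "finite X \<Longrightarrow> block_partition X S \<Longrightarrow> finite S"
  using finite_subset_distinct[of X] finite_subset[of S "{xs. set xs \<subseteq> X \<and> distinct xs}"]
  by (auto simp: block_partition_def odd_block_def)

lemma block_partition_empty: "block_partition {} S \<longleftrightarrow> S = {}"
  by (auto simp: block_partition_def odd_block_def)

(* Join a and b into the block a @ m # b; an empty a or b means that m starts or ends it. *)
definition insert_max :: "nat \<Rightarrow> nat list set \<times> nat list \<times> nat list \<Rightarrow> nat list set" where
  "insert_max m = (\<lambda>(S, a, b). insert (a @ m # b) (S - {a, b}))"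

definition insertion_data :: "nat \<Rightarrow> nat set \<Rightarrow> (nat list set \<times> nat list \<times> nat list) set" where
  "insertion_data m X = {(S, a, b). block_partition X S \<and> a \<in> insert [] S \<and> b \<in> insert [] S
     \<and> (a = b \<longrightarrow> a = []) \<and> (a = [] \<or> b \<noteq> [] \<longrightarrow> odd m)}"

lemma odd_block_append_Cons_iff:
  assumes "\<forall>x \<in> set a \<union> set b. x < m"
  shows "odd_block (a @ m # b) \<longleftrightarrow>
    (a = [] \<or> odd_block a) \<and> (b = [] \<or> odd_block b) \<and> disjnt (set a) (set b)
    \<and> (a = [] \<or> b \<noteq> [] \<longrightarrow> odd m)"
proof -
  have "a = [] \<or> last a < m" "b = [] \<or> hd b < m"
    using assms by auto
  then show ?thesis
    using assms
    by (auto simp: odd_block_def allowed_step_def successively_append_iff successively_Cons disjnt_def)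
qed

lemma insert_max_block_partition:
  assumes X: "\<forall>x\<in>X. x < m" and data: "(S, a, b) \<in> insertion_data m X"
  shows "block_partition (insert m X) (insert_max m (S, a, b))"
proof -
  have S: "block_partition X S" and a: "a \<in> insert [] S" and b: "b \<in> insert [] S"
    and ab: "a = b \<longrightarrow> a = []" and odd_m: "a = [] \<or> b \<noteq> [] \<longrightarrow> odd m"
    using data by (auto simp: insertion_data_def)
  have sub: "set L \<subseteq> X" if "L \<in> insert [] S" for L
    using S that by (auto simp: block_partition_def)
  have disj: "disjnt (set L) (set L')" if "L \<in> insert [] S" "L' \<in> insert [] S" "L \<noteq> L'" for L L'
    using S that by (auto simp: block_partition_def pairwise_def)
  have "a = [] \<or> odd_block a" "b = [] \<or> odd_block b"
    using S a b by (auto simp: block_partition_def)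
  moreover have "disjnt (set a) (set b)"
    using disj[OF a b] ab by (cases "a = b") auto
  ultimately have block: "odd_block (a @ m # b)"
    using odd_block_append_Cons_iff X sub[OF a] sub[OF b] odd_m by blast
  have "disjnt (set (a @ m # b)) (set L)" if "L \<in> S - {a, b}" for L
    using that X sub[of L] disj[OF a, of L] disj[OF b, of L] by (auto simp: disjnt_def)
  then show ?thesis
    using S block sub[OF a] sub[OF b] a b
    unfolding block_partition_def insert_max_def
    by (auto simp: pairwise_insert disjnt_sym intro: pairwise_subset)
qed

lemma card_insert_max:
  assumes "finite X" and X: "\<forall>x\<in>X. x < m" and data: "(S, a, b) \<in> insertion_data m X"
  shows "card (insert_max m (S, a, b)) + card ({a, b} - {[]}) = Suc (card S)"
proof -
  have S: "block_partition X S" and ab: "{a, b} - {[]} \<subseteq> S"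
    using data by (auto simp: insertion_data_def)
  have fin: "finite S" using block_partition_finite[OF \<open>finite X\<close> S] .
  have "a @ m # b \<notin> S"
    using block_partition_set_subset[OF S] X by fastforce
  moreover have "S - {a, b} = S - ({a, b} - {[]})"
    using block_partition_Nil_notin[OF S] by auto
  ultimately have "card (insert_max m (S, a, b)) = Suc (card (S - ({a, b} - {[]})))"
    using fin by (simp add: insert_max_def)
  moreover have "card (S - ({a, b} - {[]})) + card ({a, b} - {[]}) = card S"
    using fin ab by (metis card_Diff_subset card_mono le_add_diff_inverse2 finite_subset)
  ultimately show ?thesis by simp
qed

lemma insertion_data_max_notin:
  assumes "\<forall>x\<in>X. x < m" and "(S, a, b) \<in> insertion_data m X" and "L \<in> {a, b} \<union> S"
  shows "m \<notin> set L"
  using assms block_partition_set_subset[of X S L] by (fastforce simp: insertion_data_def)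

lemma insertion_data_recover:
  assumes "(S, a, b) \<in> insertion_data m X"
  shows "S = (S - {a, b}) \<union> ({a, b} - {[]})"
proof -
  have "[] \<notin> S" "a \<in> insert [] S" "b \<in> insert [] S"
    using assms by (auto simp: insertion_data_def dest: block_partition_Nil_notin)
  then show ?thesis by blast
qed

lemma inj_on_insert_max:
  assumes X: "\<forall>x\<in>X. x < m"
  shows "inj_on (insert_max m) (insertion_data m X)"
proof (rule inj_onI)
  fix x x' assume "x \<in> insertion_data m X" "x' \<in> insertion_data m X" "insert_max m x = insert_max m x'"
  moreover obtain S a b S' a' b' where "x = (S, a, b)" "x' = (S', a', b')"
    by (cases x, cases x')
  ultimately have data: "(S, a, b) \<in> insertion_data m X" "(S', a', b') \<in> insertion_data m X"
    and eq: "insert (a @ m # b) (S - {a, b}) = insert (a' @ m # b') (S' - {a', b'})"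
    by (simp_all add: insert_max_def)
  note notin = insertion_data_max_notin[OF X data(1)] insertion_data_max_notin[OF X data(2)]
  have "a' @ m # b' \<in> insert (a @ m # b) (S - {a, b})"
    using eq by simp
  then have "a @ m # b = a' @ m # b'"
    using notin(1)[of "a' @ m # b'"] by auto
  moreover have "m \<notin> set a" "m \<notin> set b"
    using notin(1)[of a] notin(1)[of b] by simp_all
  ultimately have same: "a' = a" "b' = b"
    using append_Cons_eq_iff[of m a b a' b'] by simp_all
  have "a @ m # b \<notin> S - {a, b}" "a @ m # b \<notin> S' - {a, b}"
    using notin(1)[of "a @ m # b"] notin(2)[of "a @ m # b"] by auto
  with eq have "S - {a, b} = S' - {a, b}"
    unfolding same by (simp add: insert_ident)
  then have "S = S'"
    using insertion_data_recover[OF data(1)] insertion_data_recover[OF data(2)] unfolding same by simp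
  then show "x = x'"
    using same \<open>x = (S, a, b)\<close> \<open>x' = (S', a', b')\<close> by simp
qed

lemma block_partition_max_block:
  assumes X: "\<forall>x\<in>X. x < m" and T: "block_partition (insert m X) T" and A: "a @ m # b \<in> T"
  shows "m \<notin> set a" and "m \<notin> set b"
    and "(a = [] \<or> odd_block a) \<and> (b = [] \<or> odd_block b) \<and> disjnt (set a) (set b)
      \<and> (a = [] \<or> b \<noteq> [] \<longrightarrow> odd m)"
proof -
  have "odd_block (a @ m # b)"
    using T A by (simp add: block_partition_def)
  then show a_b: "m \<notin> set a" "m \<notin> set b"
    by (simp_all add: odd_block_def)
  have "set (a @ m # b) \<subseteq> insert m X"
    using block_partition_set_subset[OF T A] .
  then have "\<forall>x \<in> set a \<union> set b. x < m"
    using X a_b by auto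
  then show "(a = [] \<or> odd_block a) \<and> (b = [] \<or> odd_block b) \<and> disjnt (set a) (set b)
      \<and> (a = [] \<or> b \<noteq> [] \<longrightarrow> odd m)"
    using \<open>odd_block (a @ m # b)\<close> odd_block_append_Cons_iff by blast
qed

lemma block_partition_remove_max:
  assumes X: "\<forall>x\<in>X. x < m" and T: "block_partition (insert m X) T" and A: "a @ m # b \<in> T"
  shows "block_partition X ((T - {a @ m # b}) \<union> ({a, b} - {[]}))"
proof -
  let ?A = "a @ m # b" and ?S = "(T - {a @ m # b}) \<union> ({a, b} - {[]})"
  note split = block_partition_max_block[OF assms]
  have others: "disjnt (set L) (set ?A)" if "L \<in> T - {?A}" for L
    using T A that unfolding block_partition_def pairwise_def by blast
  have "\<forall>L\<in>?S. odd_block L"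
    using T split(3) by (auto simp: block_partition_def)
  moreover have "pairwise (\<lambda>L L'. disjnt (set L) (set L')) ?S"
  proof -
    have "disjnt (set L) (set L') \<and> disjnt (set L') (set L)" if "L \<in> T - {?A}" "L' \<in> {a, b}" for L L'
      using others[OF that(1)] that(2) by (auto simp: disjnt_def)
    then show ?thesis
      using T split(3) unfolding block_partition_def pairwise_def by (auto simp: disjnt_sym)
  qed
  moreover have "(\<Union>L\<in>?S. set L) = X"
  proof -
    let ?P = "(\<Union>L\<in>T - {?A}. set L) \<union> set a \<union> set b"
    have "insert m ?P = (\<Union>L\<in>insert ?A (T - {?A}). set L)"
      unfolding UN_insert by auto
    also have "\<dots> = insert m X"
      using T insert_Diff[OF A] by (simp add: block_partition_def)
    finally have "insert m ?P = insert m X" .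
    moreover have "m \<notin> ?P" "m \<notin> X"
      using others split(1,2) X by (auto simp: disjnt_def)
    moreover have "(\<Union>L\<in>?S. set L) = ?P"
      by auto
    ultimately show ?thesis
      using insert_ident by metis
  qed
  ultimately show ?thesis
    by (simp add: block_partition_def)
qed

lemma insert_max_surj:
  assumes X: "\<forall>x\<in>X. x < m" and T: "block_partition (insert m X) T"
  shows "\<exists>x\<in>insertion_data m X. T = insert_max m x"
proof -
  obtain A where "A \<in> T" "m \<in> set A"
    using T by (auto simp: block_partition_def)
  then obtain a b where A: "a @ m # b \<in> T"
    by (metis split_list)
  define S where "S = (T - {a @ m # b}) \<union> ({a, b} - {[]})"
  note split = block_partition_max_block[OF X T A]
  have "disjnt (set L) (set (a @ m # b))" if "L \<in> T - {a @ m # b}" for L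
    using T A that unfolding block_partition_def pairwise_def by blast
  then have "a \<notin> T - {a @ m # b}" "b \<notin> T - {a @ m # b}"
    using block_partition_Nil_notin[OF T] by (cases a; cases b; fastforce simp: disjnt_def)+
  then have "T = insert_max m (S, a, b)"
    using A unfolding insert_max_def S_def by auto
  moreover have "(S, a, b) \<in> insertion_data m X"
    using block_partition_remove_max[OF X T A] split(3) unfolding insertion_data_def S_def by auto
  ultimately show ?thesis
    by blast
qed

lemma bij_betw_insert_max:
  assumes "\<forall>x\<in>X. x < m"
  shows "bij_betw (insert_max m) (insertion_data m X) {T. block_partition (insert m X) T}"
proof (rule bij_betw_imageI)
  show "inj_on (insert_max m) (insertion_data m X)"
    using inj_on_insert_max[OF assms] .
  show "insert_max m ` insertion_data m X = {T. block_partition (insert m X) T}"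
    using insert_max_block_partition[OF assms] insert_max_surj[OF assms] by fastforce
qed

lemma insertion_data_with_card:
  assumes "finite X" and X: "\<forall>x\<in>X. x < m"
  shows "{x \<in> insertion_data m X. card (insert_max m x) = h} =
    (if odd m then (\<lambda>S. (S, [], [])) ` {S. block_partition X S \<and> Suc (card S) = h} else {})
    \<union> (\<lambda>(S, a). (S, a, [])) ` (SIGMA S:block_partitions X h. S)
    \<union> (if odd m then (\<lambda>(S, b). (S, [], b)) ` (SIGMA S:block_partitions X h. S) else {})
    \<union> (if odd m then (SIGMA S:block_partitions X (Suc h). {(a, b). a \<in> S \<and> b \<in> S \<and> a \<noteq> b}) else {})"
  (is "?L = ?R")
proof (intro set_eqI iffI)
  fix x assume "x \<in> ?L"
  then obtain S a b where x: "x = (S, a, b)" and data: "(S, a, b) \<in> insertion_data m X"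
    and h: "card (insert_max m (S, a, b)) = h"
    by (cases x) auto
  note card = card_insert_max[OF assms data]
  have "[] \<notin> S" and "block_partition X S" and "a \<in> insert [] S" "b \<in> insert [] S"
    and "a = b \<longrightarrow> a = []" and "a = [] \<or> b \<noteq> [] \<longrightarrow> odd m"
    using data block_partition_Nil_notin by (auto simp: insertion_data_def)
  then show "x \<in> ?R"
    using card h unfolding x block_partitions_def
    by (cases "a = []"; cases "b = []") (auto simp: image_iff)
next
  fix x assume "x \<in> ?R"
  then obtain S a b where x: "x = (S, a, b)" and S: "block_partition X S"
    and shape: "a = [] \<and> b = [] \<and> odd m \<and> Suc (card S) = h
      \<or> a \<in> S \<and> b = [] \<and> card S = h
      \<or> a = [] \<and> b \<in> S \<and> odd m \<and> card S = h
      \<or> a \<in> S \<and> b \<in> S \<and> a \<noteq> b \<and> odd m \<and> card S = Suc h"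
    by (auto simp: block_partitions_def split: if_splits)
  have "[] \<notin> S"
    using block_partition_Nil_notin[OF S] .
  with S shape have data: "(S, a, b) \<in> insertion_data m X"
    by (auto simp: insertion_data_def)
  have "card ({a, b} - {[]}) + h = Suc (card S)"
    using shape \<open>[] \<notin> S\<close> by (auto simp: insert_Diff_if)
  then show "x \<in> ?L"
    using card_insert_max[OF assms data] data x by simp
qed

lemma card_distinct_pairs:
  "finite A \<Longrightarrow> card {(a, b). a \<in> A \<and> b \<in> A \<and> a \<noteq> b} = card A * (card A - 1)"
proof -
  assume "finite A"
  have "{(a, b). a \<in> A \<and> b \<in> A \<and> a \<noteq> b} = (SIGMA a:A. A - {a})" by auto
  then show ?thesis
    using \<open>finite A\<close> by simp
qed

lemma card_Sigma_block_partitions: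
  assumes "finite X" and "\<And>S. finite S \<Longrightarrow> finite (F S)"
    and "\<And>S. finite S \<Longrightarrow> card (F S) = f (card S)"
  shows "card (SIGMA S:block_partitions X h. F S) = f h * card (block_partitions X h)"
proof -
  have fin: "finite (block_partitions X h)" "\<And>S. S \<in> block_partitions X h \<Longrightarrow> finite S"
    using finite_block_partitions[OF assms(1)] block_partition_finite[OF assms(1)]
    by (auto simp: block_partitions_def)
  then have "card (SIGMA S:block_partitions X h. F S) = (\<Sum>S\<in>block_partitions X h. card (F S))"
    using assms(2) by (simp add: card_SigmaI)
  also have "\<dots> = (\<Sum>S\<in>block_partitions X h. f h)"
    using fin(2) assms(3) by (intro sum.cong) (auto simp: block_partitions_def)
  finally show ?thesis by simp
qed

lemma card_block_partitions_insert_max_eq: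
  assumes "finite X" and X: "\<forall>x\<in>X. x < m"
  shows "card (block_partitions (insert m X) h) = card {x \<in> insertion_data m X. card (insert_max m x) = h}"
    and "finite {x \<in> insertion_data m X. card (insert_max m x) = h}"
proof -
  define D where "D = {x \<in> insertion_data m X. card (insert_max m x) = h}"
  have "insert_max m ` D = {T \<in> insert_max m ` insertion_data m X. card T = h}"
    unfolding D_def by auto
  also have "\<dots> = block_partitions (insert m X) h"
    using bij_betw_imp_surj_on[OF bij_betw_insert_max[OF X]] by (simp add: block_partitions_def)
  finally have img: "insert_max m ` D = block_partitions (insert m X) h" .
  have inj: "inj_on (insert_max m) D"
    by (rule inj_on_subset[OF inj_on_insert_max[OF X]]) (simp add: D_def)
  then show "card (block_partitions (insert m X) h) = card D"
    using card_image[OF inj] img by simp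
  have "finite (block_partitions (insert m X) h)"
    using finite_block_partitions[of "insert m X"] assms(1) unfolding block_partitions_def
    by (auto intro: finite_subset[of _ "{T. block_partition (insert m X) T}"])
  then show "finite D"
    using finite_imageD[of "insert_max m" D] img inj by simp
qed

lemma card_block_partitions_insert_max:
  assumes "finite X" and X: "\<forall>x\<in>X. x < m"
  shows "card (block_partitions (insert m X) h) =
    (if odd m then (if h = 0 then 0 else card (block_partitions X (h - 1)))
                   + 2 * h * card (block_partitions X h) + Suc h * h * card (block_partitions X (Suc h))
     else h * card (block_partitions X h))"
proof -
  define P0 where "P0 = (\<lambda>S. (S, [] :: nat list, [] :: nat list)) ` {S. block_partition X S \<and> Suc (card S) = h}"
  define P1 where "P1 = (\<lambda>(S, a). (S, a, [] :: nat list)) ` (SIGMA S:block_partitions X h. S)"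
  define P2 where "P2 = (\<lambda>(S, b). (S, [] :: nat list, b)) ` (SIGMA S:block_partitions X h. S)"
  define P3 where "P3 = (SIGMA S:block_partitions X (Suc h). {(a, b). a \<in> S \<and> b \<in> S \<and> a \<noteq> b})"
  note D = insertion_data_with_card[OF assms, of h, folded P0_def P1_def P2_def P3_def]
  note card_D = card_block_partitions_insert_max_eq[OF assms, of h, unfolded D]
  have "card P0 = card {S. block_partition X S \<and> Suc (card S) = h}"
    unfolding P0_def by (rule card_image) (simp add: inj_on_def)
  then have card0: "card P0 = (if h = 0 then 0 else card (block_partitions X (h - 1)))"
    by (cases h) (simp_all add: block_partitions_def)
  have "card (SIGMA S:block_partitions X h. S) = h * card (block_partitions X h)"
    by (rule card_Sigma_block_partitions[OF assms(1)]) simp_all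
  then have card12: "card P1 = h * card (block_partitions X h)" "card P2 = h * card (block_partitions X h)"
    unfolding P1_def P2_def by (simp_all add: card_image inj_on_def)
  have "finite {(a, b). a \<in> S \<and> b \<in> S \<and> a \<noteq> b}" if "finite S" for S :: "nat list set"
    using that by (auto intro: finite_subset[of _ "S \<times> S"])
  then have card3: "card P3 = Suc h * (Suc h - 1) * card (block_partitions X (Suc h))"
    unfolding P3_def
    by (rule card_Sigma_block_partitions[OF assms(1), where f = "\<lambda>s. s * (s - 1)"])
      (simp_all add: card_distinct_pairs)
  have disj: "P0 \<inter> P1 = {}" "P0 \<inter> P2 = {}" "P0 \<inter> P3 = {}"
    "P1 \<inter> P2 = {}" "P1 \<inter> P3 = {}" "P2 \<inter> P3 = {}"
    unfolding P0_def P1_def P2_def P3_def block_partitions_def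
    by (auto dest: block_partition_Nil_notin)
  show ?thesis
  proof (cases "odd m")
    case True
    then have "finite P0" "finite P1" "finite P2" "finite P3"
      using card_D(2) by auto
    then have "card (P0 \<union> P1 \<union> P2 \<union> P3) = card P0 + card P1 + card P2 + card P3"
      using disj by (simp add: card_Un_disjoint Int_Un_distrib2)
    then show ?thesis
      using True card_D(1) card0 card12 card3 by simp
  qed (simp add: card_D card12)
qed

lemma card_block_partitions_empty: "card (block_partitions {} h) = (if h = 0 then 1 else 0)"
proof -
  have "block_partitions {} h = (if h = 0 then {{}} else {})"
    by (auto simp: block_partitions_def block_partition_empty)
  then show ?thesis by simp
qed

theorem card_block_partitions_even: "card (block_partitions {1..2 * i} h) = median_triangle i h"
proof (induction i arbitrary: h)
  case 0
  then show ?case by (simp add: card_block_partitions_empty)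
next
  case (Suc i)
  let ?X = "{1..2 * i}" and ?Y = "insert (Suc (2 * i)) {1..2 * i}"
  have "{1..2 * Suc i} = insert (Suc (Suc (2 * i))) ?Y" by auto
  then have "card (block_partitions {1..2 * Suc i} h) = h * card (block_partitions ?Y h)"
    by (simp add: card_block_partitions_insert_max)
  also have "card (block_partitions ?Y h) =
      (if h = 0 then 0 else median_triangle i (h - 1)) + 2 * h * median_triangle i h
      + Suc h * h * median_triangle i (Suc h)"
    using Suc.IH[of "h - 1"] Suc.IH[of h] Suc.IH[of "Suc h"]
    by (simp add: card_block_partitions_insert_max del: One_nat_def)
  finally show ?case
    by (cases h) (simp_all add: algebra_simps power2_eq_square)
qed

section \<open>Cycles with only odd-odd drops\<close>

lemma only_odd_odd_drops_iff_successively: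
  assumes "xs \<noteq> []"
  shows "only_odd_odd_drops xs \<longleftrightarrow> successively allowed_step (xs @ [hd xs])"
proof -
  have "(xs @ [hd xs]) ! Suc i = xs ! (Suc i mod length xs)" if "i < length xs" for i
  proof (cases "Suc i < length xs")
    case False
    then have "Suc i = length xs" using that by simp
    then show ?thesis using assms by (simp add: nth_append hd_conv_nth)
  qed (simp add: nth_append)
  then show ?thesis
    unfolding only_odd_odd_drops_def successively_conv_nth allowed_step_def
    by (auto simp: nth_append)
qed

lemma only_odd_odd_drops_rotate1: "only_odd_odd_drops (rotate1 xs) \<longleftrightarrow> only_odd_odd_drops xs"
proof (cases xs)
  case (Cons y zs)
  then show ?thesis
    by (cases zs)
      (auto simp: only_odd_odd_drops_iff_successively successively_append_iff successively_Cons hd_append)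
qed simp

lemma only_odd_odd_drops_rotate: "only_odd_odd_drops (rotate k xs) \<longleftrightarrow> only_odd_odd_drops xs"
  by (induction k) (simp_all add: only_odd_odd_drops_rotate1)

lemma only_odd_odd_drops_Cons_max:
  assumes "odd N" and "ys \<noteq> []" and "\<forall>y\<in>set ys. y < N"
  shows "only_odd_odd_drops (N # ys) \<longleftrightarrow> odd (hd ys) \<and> successively allowed_step ys"
proof -
  have "hd ys < N" "last ys < N"
    using assms(2,3) by simp_all
  then have "hd ys < N" "\<not> N < last ys"
    by simp_all
  with assms show ?thesis
    by (auto simp: only_odd_odd_drops_iff_successively successively_append_iff
        successively_Cons allowed_step_def)
qed

lemma rotations_eq_range:
  assumes "length xs = N" and "0 < N"
  shows "{rotate k xs | k. k < N} = range (\<lambda>k. rotate k xs)"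
proof -
  have "rotate k xs \<in> {rotate k xs | k. k < N}" for k
    using assms rotate_conv_mod[of k xs] by auto
  then show ?thesis by auto
qed

lemma range_rotate_rotate: "range (\<lambda>k. rotate k (rotate i xs)) = range (\<lambda>k. rotate k xs)"
proof -
  have "rotate k xs = rotate (k + (length xs - 1) * i) (rotate i xs)" for k
  proof (cases xs)
    case (Cons y ys)
    then have "k + (length xs - 1) * i + i = k + length xs * i"
      by simp
    have "rotate (k + (length xs - 1) * i) (rotate i xs) = rotate (k + (length xs - 1) * i + i) xs"
      by (rule rotate_rotate)
    also have "\<dots> = rotate k (rotate (length xs * i) xs)"
      unfolding \<open>k + (length xs - 1) * i + i = k + length xs * i\<close> by (rule rotate_rotate[symmetric])
    finally show ?thesis by simp
  qed simp
  then show ?thesis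
    by (auto simp: rotate_rotate)
qed

lemma length_perms_list: "xs \<in> perms_list N \<Longrightarrow> length xs = N"
  unfolding perms_list_def using distinct_card by fastforce

lemma cycles_on_eq_range: "0 < N \<Longrightarrow> cycles_on N = (\<lambda>xs. range (\<lambda>k. rotate k xs)) ` perms_list N"
  unfolding cycles_on_def by (intro image_cong refl) (simp add: rotations_eq_range length_perms_list)

lemma Cons_max_in_perms_list:
  assumes "0 < N"
  shows "N # ys \<in> perms_list N \<longleftrightarrow> distinct ys \<and> set ys = {1..N - 1}"
proof
  assume "N # ys \<in> perms_list N"
  then have "distinct ys" "N \<notin> set ys" "insert N (set ys) = {1..N}"
    by (simp_all add: perms_list_def)
  moreover have "{1..N} - {N} = {1..N - 1}"
    by auto
  ultimately show "distinct ys \<and> set ys = {1..N - 1}"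
    by (metis Diff_insert_absorb)
qed (use assms in \<open>auto simp: perms_list_def\<close>)

lemma odd_block_iff_only_odd_odd_drops_Cons_max:
  assumes "odd N" and "2 \<le> N"
  shows "odd_block ys \<and> set ys = {1..N - 1} \<longleftrightarrow>
    N # ys \<in> perms_list N \<and> only_odd_odd_drops (N # ys)"
proof (cases "set ys = {1..N - 1}")
  case True
  then have "ys \<noteq> []" "\<forall>y\<in>set ys. y < N"
    using assms(2) by auto
  then show ?thesis
    using True assms Cons_max_in_perms_list[of N ys] only_odd_odd_drops_Cons_max[of N ys]
    by (auto simp: odd_block_def)
qed (use assms Cons_max_in_perms_list[of N ys] in auto)

lemma inj_on_rotations_Cons_max:
  "inj_on (\<lambda>ys. range (\<lambda>k. rotate k (N # ys))) {ys. N # ys \<in> perms_list N}"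
proof (rule inj_onI)
  fix ys ys' assume ys: "ys \<in> {ys. N # ys \<in> perms_list N}"
    and "range (\<lambda>k. rotate k (N # ys)) = range (\<lambda>k. rotate k (N # ys'))"
  then obtain k where k: "N # ys' = rotate k (N # ys)"
    by (metis (mono_tags, lifting) rangeE rangeI rotate0 id_apply)
  have dist: "distinct (N # ys)" and len: "length (N # ys) = N"
    using ys length_perms_list[of "N # ys"] by (simp_all add: perms_list_def)
  have "(N # ys) ! (k mod N) = (N # ys) ! 0"
    using hd_rotate_conv_nth[of "N # ys" k] k len by (metis list.distinct(1) list.sel(1) nth_Cons_0)
  moreover have "k mod N < length (N # ys)" "0 < length (N # ys)"
    using len by simp_all
  ultimately have "k mod N = 0"
    using nth_eq_iff_index_eq[OF dist] by blast
  then show "ys = ys'"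
    using k len by (metis list.inject rotate_conv_mod rotate0 id_apply)
qed

lemma rotations_perms_list_Cons_max:
  assumes "xs \<in> perms_list N" and "0 < N"
  obtains ys where "N # ys \<in> perms_list N" and "range (\<lambda>k. rotate k xs) = range (\<lambda>k. rotate k (N # ys))"
proof -
  have len: "length xs = N"
    using length_perms_list[OF assms(1)] .
  have "N \<in> set xs"
    using assms by (simp add: perms_list_def)
  then obtain i where i: "i < N" "xs ! i = N"
    using len by (metis in_set_conv_nth)
  moreover have "xs \<noteq> []"
    using len assms(2) by auto
  ultimately have "hd (rotate i xs) = N" "rotate i xs \<noteq> []"
    using hd_rotate_conv_nth[of xs i] len by simp_all
  then obtain ys where ys: "rotate i xs = N # ys"
    by (metis list.collapse)
  have "N # ys \<in> perms_list N"
    using assms(1) by (simp flip: ys add: perms_list_def)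
  moreover have "range (\<lambda>k. rotate k xs) = range (\<lambda>k. rotate k (N # ys))"
    using range_rotate_rotate[of i xs] ys by simp
  ultimately show thesis
    using that by blast
qed

lemma bij_betw_odd_blocks_cycles:
  assumes "odd N" and "2 \<le> N"
  shows "bij_betw (\<lambda>ys. range (\<lambda>k. rotate k (N # ys)))
    {ys. odd_block ys \<and> set ys = {1..N - 1}} {C \<in> cycles_on N. \<forall>xs\<in>C. only_odd_odd_drops xs}"
proof (rule bij_betw_imageI)
  let ?A = "{ys. odd_block ys \<and> set ys = {1..N - 1}}"
  note blocks = odd_block_iff_only_odd_odd_drops_Cons_max[OF assms]
  show "inj_on (\<lambda>ys. range (\<lambda>k. rotate k (N # ys))) ?A"
    using blocks by (blast intro: inj_on_subset[OF inj_on_rotations_Cons_max])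
  have cycles: "cycles_on N = (\<lambda>xs. range (\<lambda>k. rotate k xs)) ` perms_list N"
    using cycles_on_eq_range assms(2) by simp
  show "(\<lambda>ys. range (\<lambda>k. rotate k (N # ys))) ` ?A
      = {C \<in> cycles_on N. \<forall>xs\<in>C. only_odd_odd_drops xs}"
  proof (intro equalityI subsetI)
    fix C assume "C \<in> (\<lambda>ys. range (\<lambda>k. rotate k (N # ys))) ` ?A"
    then show "C \<in> {C \<in> cycles_on N. \<forall>xs\<in>C. only_odd_odd_drops xs}"
      unfolding cycles using blocks by (auto simp: only_odd_odd_drops_rotate)
  next
    fix C assume C: "C \<in> {C \<in> cycles_on N. \<forall>xs\<in>C. only_odd_odd_drops xs}"
    then obtain xs where "xs \<in> perms_list N" and "C = range (\<lambda>k. rotate k xs)"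
      unfolding cycles by blast
    then obtain ys where ys: "N # ys \<in> perms_list N" and C_eq: "C = range (\<lambda>k. rotate k (N # ys))"
      using rotations_perms_list_Cons_max assms(2) by (metis pos2 order_less_le_trans)
    have "only_odd_odd_drops (N # ys)"
      using C C_eq by (metis (mono_tags, lifting) mem_Collect_eq rangeI rotate0 id_apply)
    then show "C \<in> (\<lambda>ys. range (\<lambda>k. rotate k (N # ys))) ` ?A"
      using ys C_eq blocks by blast
  qed
qed

lemma card_block_partitions_1: "card (block_partitions X 1) = card {L. odd_block L \<and> set L = X}"
proof -
  have "block_partitions X 1 = (\<lambda>L. {L}) ` {L. odd_block L \<and> set L = X}"
    by (auto simp: block_partitions_def block_partition_def card_Suc_eq)
  then show ?thesis
    by (simp add: card_image)
qed

theorem corollary1p5: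
  fixes n :: nat
  assumes "n \<ge> 2"
  shows "genocchi_median (n - 2) =
         of_nat (card {C \<in> cycles_on (2 * n - 1). \<forall>xs \<in> C. only_odd_odd_drops xs})"
proof -
  have N: "odd (2 * n - 1)" "2 \<le> 2 * n - 1" "2 * n - 1 - 1 = 2 * (n - 1)"
    using assms by auto
  have "card {C \<in> cycles_on (2 * n - 1). \<forall>xs \<in> C. only_odd_odd_drops xs}
      = card {L. odd_block L \<and> set L = {1..2 * (n - 1)}}"
    using bij_betw_same_card[OF bij_betw_odd_blocks_cycles[OF N(1,2)]] N(3) by simp
  also have "\<dots> = median_triangle (n - 1) 1"
    using card_block_partitions_1 card_block_partitions_even by metis
  finally have count: "card {C \<in> cycles_on (2 * n - 1). \<forall>xs \<in> C. only_odd_odd_drops xs}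
      = median_triangle (n - 1) 1" .
  have "Suc (n - 2) = n - 1"
    using assms by simp
  then show ?thesis
    using genocchi_median_eq_median_triangle[of "n - 2"] count by (simp only:)
qed

end
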